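(* Let $\mathfrak S$ be a commutative semiring with identity. Each of the following sets of ideals of $\mathfrak S$, endowed with the ideal topology, is quasi-compact: the set of maximal ideals, the set of prime ideals, the set of strongly irreducible ideals, the set of primary ideals, the set of irreducible ideals, and the set of radical ideals.
   Context: A semiring $(\mathfrak S,+,0,\cdot,1)$ has $(\mathfrak S,+,0)$ a commutative monoid, $(\mathfrak S,\cdot,1)$ a monoid, $0r=r0=0$, and two-sided distributivity; all semirings are commutative. An ideal is a nonempty proper subset closed under addition and under multiplication by elements of $\mathfrak S$. Prime: $ab\in\mathfrak p\Rightarrow a\in\mathfrak p$ or $b\in\mathfrak p$. Maximal: not properly contained in another ideal. Primary: $xy\in\mathfrak a\Rightarrow x\in\mathfrak a$ or $y^n\in\mathfrak a$ for some $n$. Strongly irreducible: for ideals $\mathfrak a,\mathfrak b$, $\mathfrak a\cap\mathfrak b\subseteq\mathfrak s$ implies $\mathfrak a\subseteq\mathfrak s$ or $\mathfrak b\subseteq\mathfrak s$. Irreducible: $\mathfrak a\cap\mathfrak b=\mathfrak s$ implies $\mathfrak a=\mathfrak s$ or $\mathfrak b=\mathfrak s$. Radical: $\mathfrak a=\sqrt{\mathfrak a}=\{r\mid r^n\in\mathfrak a\text{ for some }n\ge1\}$. For a set $\sigma_{\mathfrak S}$ of ideals and an ideal $\mathfrak a$, $\mathfrak a^{\uparrow}=\{\mathfrak x\in\sigma_{\mathfrak S}\mid\mathfrak a\subseteq\mathfrak x\}$; the ideal topology on $\sigma_{\mathfrak S}$ has the sets $\mathfrak a^{\uparrow}$ as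 a subbasis of closed sets. *)

theory Defs
  imports "HOL-Analysis.Analysis"
begin

text \<open>A commutative semiring with identity is modelled by the type class
  combination comm_semiring_0 + comm_monoid_mult (this does not force 0 \<noteq> 1).\<close>

definition ideal :: "'a::{comm_semiring_0,comm_monoid_mult} set \<Rightarrow> bool" where
  "ideal I \<longleftrightarrow> I \<noteq> {} \<and> I \<noteq> UNIV \<and>
     (\<forall>x\<in>I. \<forall>y\<in>I. x + y \<in> I) \<and> (\<forall>r. \<forall>x\<in>I. r * x \<in> I)"

definition prime_ideal :: "'a::{comm_semiring_0,comm_monoid_mult} set \<Rightarrow> bool" where
  "prime_ideal P \<longleftrightarrow> ideal P \<and> (\<forall>a b. a * b \<in> P \<longrightarrow> a \<in> P \<or> b \<in> P)"

definition maximal_ideal :: "'a::{comm_semiring_0,comm_monoid_mult} set \<Rightarrow> bool" where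
  "maximal_ideal M \<longleftrightarrow> ideal M \<and> (\<forall>J. ideal J \<and> M \<subseteq> J \<longrightarrow> J = M)"

definition primary_ideal :: "'a::{comm_semiring_0,comm_monoid_mult} set \<Rightarrow> bool" where
  "primary_ideal A \<longleftrightarrow> ideal A \<and>
     (\<forall>x y. x * y \<in> A \<longrightarrow> x \<in> A \<or> (\<exists>n. y ^ n \<in> A))"

definition strongly_irreducible_ideal :: "'a::{comm_semiring_0,comm_monoid_mult} set \<Rightarrow> bool" where
  "strongly_irreducible_ideal S \<longleftrightarrow> ideal S \<and>
     (\<forall>A B. ideal A \<and> ideal B \<and> A \<inter> B \<subseteq> S \<longrightarrow> A \<subseteq> S \<or> B \<subseteq> S)"

definition irreducible_ideal :: "'a::{comm_semiring_0,comm_monoid_mult} set \<Rightarrow> bool" where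
  "irreducible_ideal S \<longleftrightarrow> ideal S \<and>
     (\<forall>A B. ideal A \<and> ideal B \<and> A \<inter> B = S \<longrightarrow> A = S \<or> B = S)"

definition ideal_radical :: "'a::{comm_semiring_0,comm_monoid_mult} set \<Rightarrow> 'a set" where
  "ideal_radical A = {r. \<exists>n\<ge>1. r ^ n \<in> A}"

definition radical_ideal :: "'a::{comm_semiring_0,comm_monoid_mult} set \<Rightarrow> bool" where
  "radical_ideal A \<longleftrightarrow> ideal A \<and> A = ideal_radical A"

definition up_set :: "'a set set \<Rightarrow> 'a set \<Rightarrow> 'a set set" where
  "up_set \<sigma> a = {x \<in> \<sigma>. a \<subseteq> x}"

text \<open>Ideal topology on \<sigma>: the sets a-up (a an ideal) form a subbasis of closed sets,
  i.e. their complements in \<sigma> form a subbasis of open sets (\<sigma> itself added so that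
  the carrier of the generated topology is exactly \<sigma>).\<close>
definition ideal_topology :: "'a::{comm_semiring_0,comm_monoid_mult} set set \<Rightarrow> 'a set topology" where
  "ideal_topology \<sigma> =
     topology_generated_by (insert \<sigma> {\<sigma> - up_set \<sigma> a | a. ideal a})"

end

theory Submission
  imports Defs
begin

text \<open>Every maximal ideal lies in each of the six classes, so it suffices to show that any set
  \<sigma> of ideals containing all maximal ideals is quasi-compact. By Alexander's subbase theorem
  it is enough to consider covers of \<sigma> by subbasic open sets \<sigma> - a\<up>. If the ideals a
  occurring in such a cover had no finite subcover, every finitely many of them would lie in a
  common ideal of \<sigma>; hence all of them would lie in one maximal ideal M \<in> \<sigma>, and M would not
  be covered.\<close>

lemma ideal_add: "ideal I \<Longrightarrow> x \<in> I \<Longrightarrow> y \<in> I \<Longrightarrow> x + y \<in> I"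
  unfolding ideal_def by blast

lemma ideal_mult_left: "ideal I \<Longrightarrow> x \<in> I \<Longrightarrow> r * x \<in> I"
  unfolding ideal_def by blast

lemma ideal_mult_right: "ideal I \<Longrightarrow> x \<in> I \<Longrightarrow> x * r \<in> I"
  by (metis ideal_mult_left mult.commute)

lemma ideal_zero: "ideal I \<Longrightarrow> 0 \<in> I"
  unfolding ideal_def by (metis all_not_in_conv mult_zero_left)

lemma one_notin_ideal: "ideal I \<Longrightarrow> 1 \<notin> I"
  unfolding ideal_def by (metis UNIV_eq_I mult.right_neutral)

lemma ideal_iff_one_notin:
  "ideal I \<longleftrightarrow> I \<noteq> {} \<and> 1 \<notin> I \<and> (\<forall>x\<in>I. \<forall>y\<in>I. x + y \<in> I) \<and> (\<forall>r. \<forall>x\<in>I. r * x \<in> I)"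
  unfolding ideal_def by (metis UNIV_I mult.right_neutral subsetI subset_antisym)

lemma ideal_Inter:
  assumes "\<J> \<noteq> {}" and ideals: "\<And>I. I \<in> \<J> \<Longrightarrow> ideal I"
  shows "ideal (\<Inter>\<J>)"
  unfolding ideal_iff_one_notin[of "\<Inter>\<J>"]
proof (intro conjI ballI allI)
  show "\<Inter>\<J> \<noteq> {}" using ideals ideal_zero by blast
  show "1 \<notin> \<Inter>\<J>" using assms one_notin_ideal by blast
  show "x + y \<in> \<Inter>\<J>" if "x \<in> \<Inter>\<J>" "y \<in> \<Inter>\<J>" for x y
    using that ideals ideal_add by blast
  show "r * x \<in> \<Inter>\<J>" if "x \<in> \<Inter>\<J>" for r x
    using that ideals ideal_mult_left by blast
qed

lemma ideal_Union_directed: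
  assumes "\<J> \<noteq> {}" and "\<And>I. I \<in> \<J> \<Longrightarrow> ideal I"
    and directed: "\<And>I J. I \<in> \<J> \<Longrightarrow> J \<in> \<J> \<Longrightarrow> \<exists>K\<in>\<J>. I \<union> J \<subseteq> K"
  shows "ideal (\<Union>\<J>)"
  unfolding ideal_iff_one_notin[of "\<Union>\<J>"]
proof (intro conjI ballI allI)
  show "\<Union>\<J> \<noteq> {}" "1 \<notin> \<Union>\<J>"
    using assms(1,2) ideal_zero one_notin_ideal by blast+
next
  fix x y assume "x \<in> \<Union>\<J>" "y \<in> \<Union>\<J>"
  then obtain I J where "I \<in> \<J>" "J \<in> \<J>" "x \<in> I" "y \<in> J" by blast
  with directed obtain K where "K \<in> \<J>" "x \<in> K" "y \<in> K" by blast
  then show "x + y \<in> \<Union>\<J>" using assms(2) ideal_add by blast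
next
  fix r x assume "x \<in> \<Union>\<J>"
  then show "r * x \<in> \<Union>\<J>" using assms(2) ideal_mult_left by blast
qed

lemma ex_maximal_ideal_superset:
  assumes "ideal J"
  shows "\<exists>M. maximal_ideal M \<and> J \<subseteq> M"
proof -
  let ?\<A> = "{I. ideal I \<and> J \<subseteq> I}"
  have "\<exists>M\<in>?\<A>. \<forall>I\<in>?\<A>. M \<subseteq> I \<longrightarrow> I = M"
  proof (rule subset_Zorn_nonempty)
    show "?\<A> \<noteq> {}" using assms by blast
  next
    fix \<C> assume "\<C> \<noteq> {}" and "subset.chain ?\<A> \<C>"
    then have "\<C> \<subseteq> ?\<A>"
      and chain: "\<And>I I'. I \<in> \<C> \<Longrightarrow> I' \<in> \<C> \<Longrightarrow> I \<subseteq> I' \<or> I' \<subseteq> I"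
      unfolding subset_chain_def by blast+
    have "\<exists>K\<in>\<C>. I \<union> I' \<subseteq> K" if "I \<in> \<C>" "I' \<in> \<C>" for I I'
      using chain[OF that] that by (metis sup.absorb1 sup.absorb2 order_refl)
    with \<open>\<C> \<noteq> {}\<close> \<open>\<C> \<subseteq> ?\<A>\<close> have "ideal (\<Union>\<C>)"
      by (intro ideal_Union_directed) auto
    with \<open>\<C> \<noteq> {}\<close> \<open>\<C> \<subseteq> ?\<A>\<close> show "\<Union>\<C> \<in> ?\<A>" by blast
  qed
  then obtain M where "ideal M" "J \<subseteq> M" and "\<forall>I. ideal I \<and> J \<subseteq> I \<longrightarrow> M \<subseteq> I \<longrightarrow> I = M"
    by auto
  then have "maximal_ideal M" unfolding maximal_ideal_def by (meson order_trans)
  with \<open>J \<subseteq> M\<close> show ?thesis by blast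
qed

text \<open>The ideals generated by the finite subsets of X are proper and form a directed family;
  their union is a proper ideal containing X.\<close>

lemma ex_maximal_ideal_superset_finitary:
  assumes bounded: "\<And>T. finite T \<Longrightarrow> T \<subseteq> X \<Longrightarrow> \<exists>I. ideal I \<and> T \<subseteq> I"
  shows "\<exists>M. maximal_ideal M \<and> X \<subseteq> M"
proof -
  define generated where "generated T = \<Inter>{I. ideal I \<and> T \<subseteq> I}" for T :: "'a set"
  define \<J> where "\<J> = generated ` {T. finite T \<and> T \<subseteq> X}"
  have generated_ideal: "ideal (generated T)" if "finite T" "T \<subseteq> X" for T
    unfolding generated_def using bounded[OF that] by (intro ideal_Inter) auto
  have generated_mono: "generated S \<subseteq> generated T" if "S \<subseteq> T" for S T
    unfolding generated_def using that by blast
  have X_subset: "X \<subseteq> \<Union>\<J>"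
  proof
    fix x assume "x \<in> X"
    then have "generated {x} \<in> \<J>" unfolding \<J>_def by auto
    moreover have "x \<in> generated {x}" unfolding generated_def by simp
    ultimately show "x \<in> \<Union>\<J>" by blast
  qed
  have "ideal (\<Union>\<J>)"
  proof (rule ideal_Union_directed)
    show "\<J> \<noteq> {}" unfolding \<J>_def by auto
    show "ideal I" if "I \<in> \<J>" for I using that generated_ideal unfolding \<J>_def by blast
    show "\<exists>K\<in>\<J>. I \<union> J \<subseteq> K" if "I \<in> \<J>" "J \<in> \<J>" for I J
    proof -
      obtain S where "finite S" "S \<subseteq> X" "I = generated S"
        using \<open>I \<in> \<J>\<close> unfolding \<J>_def by blast
      moreover obtain T where "finite T" "T \<subseteq> X" "J = generated T"
        using \<open>J \<in> \<J>\<close> unfolding \<J>_def by blast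
      moreover have "generated (S \<union> T) \<in> \<J>"
        unfolding \<J>_def using calculation by auto
      ultimately show ?thesis
        using generated_mono[of S "S \<union> T"] generated_mono[of T "S \<union> T"] by blast
    qed
  qed
  then obtain M where "maximal_ideal M" "\<Union>\<J> \<subseteq> M"
    by (meson ex_maximal_ideal_superset)
  with X_subset show ?thesis by (meson order.trans)
qed

lemma maximal_ideal_coprime:
  assumes "maximal_ideal M" and "a \<notin> M"
  shows "\<exists>m\<in>M. \<exists>s. m + s * a = 1"
proof (rule ccontr)
  assume no_unit: "\<not> ?thesis"
  have M: "ideal M" using assms(1) unfolding maximal_ideal_def by blast
  define K where "K = {m + s * a | m s. m \<in> M}"
  have "ideal K"
    unfolding ideal_iff_one_notin[of K]
  proof (intro conjI ballI allI)
    show "K \<noteq> {}" unfolding K_def using ideal_zero[OF M] by blast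
    show "1 \<notin> K" using no_unit unfolding K_def by auto
  next
    fix x y assume "x \<in> K" "y \<in> K"
    then obtain m1 s1 m2 s2 where "m1 \<in> M" "m2 \<in> M" "x = m1 + s1 * a" "y = m2 + s2 * a"
      unfolding K_def by blast
    moreover have "m1 + s1 * a + (m2 + s2 * a) = (m1 + m2) + (s1 + s2) * a"
      by (simp add: algebra_simps)
    ultimately show "x + y \<in> K" unfolding K_def using ideal_add[OF M] by fastforce
  next
    fix r x assume "x \<in> K"
    then obtain m s where "m \<in> M" "x = m + s * a" unfolding K_def by blast
    moreover have "r * (m + s * a) = r * m + (r * s) * a" by (simp add: algebra_simps)
    ultimately show "r * x \<in> K" unfolding K_def using ideal_mult_left[OF M] by fastforce
  qed
  moreover have "M \<subseteq> K"
  proof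
    fix m assume "m \<in> M"
    moreover have "m = m + 0 * a" by simp
    ultimately show "m \<in> K" unfolding K_def by blast
  qed
  ultimately have "K = M" using assms(1) unfolding maximal_ideal_def by blast
  moreover have "a \<in> K"
  proof -
    have "a = 0 + 1 * a" by simp
    then show ?thesis unfolding K_def using ideal_zero[OF M] by blast
  qed
  ultimately show False using assms(2) by blast
qed

lemma maximal_imp_prime_ideal:
  assumes "maximal_ideal M"
  shows "prime_ideal M"
proof -
  have M: "ideal M" using assms unfolding maximal_ideal_def by blast
  have "a \<in> M \<or> b \<in> M" if "a * b \<in> M" for a b
  proof (rule ccontr)
    assume "\<not> (a \<in> M \<or> b \<in> M)"
    then obtain m1 s1 m2 s2 where "m1 \<in> M" "m1 + s1 * a = 1" "m2 \<in> M" "m2 + s2 * b = 1"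
      using maximal_ideal_coprime[OF assms] by metis
    then have "1 = (m1 + s1 * a) * (m2 + s2 * b)" by simp
    also have "\<dots> = m1 * (m2 + s2 * b) + (s1 * a * m2 + s1 * s2 * (a * b))"
      by (simp add: algebra_simps)
    also have "\<dots> \<in> M"
      using \<open>m1 \<in> M\<close> \<open>m2 \<in> M\<close> \<open>a * b \<in> M\<close>
      by (intro ideal_add[OF M]) (simp_all add: ideal_mult_left[OF M] ideal_mult_right[OF M])
    finally show False using one_notin_ideal[OF M] by blast
  qed
  with M show ?thesis unfolding prime_ideal_def by blast
qed

lemma prime_imp_strongly_irreducible_ideal:
  assumes "prime_ideal P"
  shows "strongly_irreducible_ideal P"
  unfolding strongly_irreducible_ideal_def
proof (intro conjI allI impI)
  show "ideal P" using assms unfolding prime_ideal_def by blast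
  fix A B assume "ideal A \<and> ideal B \<and> A \<inter> B \<subseteq> P"
  then have "a * b \<in> P" if "a \<in> A" "b \<in> B" for a b
    using that ideal_mult_left ideal_mult_right by blast
  then show "A \<subseteq> P \<or> B \<subseteq> P" using assms unfolding prime_ideal_def by blast
qed

lemma strongly_irreducible_imp_irreducible_ideal:
  "strongly_irreducible_ideal S \<Longrightarrow> irreducible_ideal S"
  unfolding strongly_irreducible_ideal_def irreducible_ideal_def by blast

lemma prime_imp_primary_ideal: "prime_ideal P \<Longrightarrow> primary_ideal P"
  unfolding prime_ideal_def primary_ideal_def by (metis power_one_right)

lemma prime_ideal_power_mem:
  assumes "prime_ideal P" and "r ^ n \<in> P"
  shows "r \<in> P"
  using assms(2)
proof (induction n)
  case 0
  then show ?case using assms(1) one_notin_ideal unfolding prime_ideal_def by auto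
next
  case (Suc n)
  then show ?case using assms(1) unfolding prime_ideal_def by auto
qed

lemma prime_imp_radical_ideal:
  assumes "prime_ideal P"
  shows "radical_ideal P"
proof -
  have "ideal_radical P = P"
    unfolding ideal_radical_def using prime_ideal_power_mem[OF assms] by (force intro: exI[of _ 1])
  then show ?thesis using assms unfolding radical_ideal_def prime_ideal_def by blast
qed

lemma finite'_intersection_of_eq_relative_to_Union:
  assumes "\<Union>\<S> \<in> \<S>"
  shows "finite' intersection_of (\<lambda>U. U \<in> \<S>) = finite intersection_of (\<lambda>U. U \<in> \<S>) relative_to \<Union>\<S>"
proof (intro ext iffI)
  fix T
  assume "(finite' intersection_of (\<lambda>U. U \<in> \<S>)) T"
  then obtain \<U> where \<U>: "finite \<U>" "\<U> \<noteq> {}" "\<U> \<subseteq> \<S>" "\<Inter>\<U> = T"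
    unfolding intersection_of_def by auto
  then have "\<Union>\<S> \<inter> \<Inter>\<U> = T" by blast
  moreover have "(finite intersection_of (\<lambda>U. U \<in> \<S>)) (\<Inter>\<U>)"
    unfolding intersection_of_def using \<U> by blast
  ultimately show "(finite intersection_of (\<lambda>U. U \<in> \<S>) relative_to \<Union>\<S>) T"
    unfolding relative_to_def by blast
next
  fix T
  assume "(finite intersection_of (\<lambda>U. U \<in> \<S>) relative_to \<Union>\<S>) T"
  then obtain \<U> where "finite \<U>" "\<U> \<subseteq> \<S>" "\<Union>\<S> \<inter> \<Inter>\<U> = T"
    unfolding relative_to_def intersection_of_def by auto
  then have "finite (insert (\<Union>\<S>) \<U>)" "insert (\<Union>\<S>) \<U> \<subseteq> \<S>" "\<Inter>(insert (\<Union>\<S>) \<U>) = T"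
    using assms by auto
  then show "(finite' intersection_of (\<lambda>U. U \<in> \<S>)) T"
    unfolding intersection_of_def by blast
qed

text \<open>Alexander's subbase theorem for topology_generated_by. Its open sets are unions of
  nonempty finite intersections, so \<Union>\<S> \<in> \<S> is needed to match the relative finite
  intersections of the library theorem.\<close>

lemma compact_space_topology_generated_by:
  assumes "\<Union>\<S> \<in> \<S>"
    and "\<And>\<C>. \<C> \<subseteq> \<S> \<Longrightarrow> \<Union>\<C> = \<Union>\<S> \<Longrightarrow> \<exists>\<C>'. finite \<C>' \<and> \<C>' \<subseteq> \<C> \<and> \<Union>\<C>' = \<Union>\<S>"
  shows "compact_space (topology_generated_by \<S>)"
  using assms(2)
  by (intro Alexander_subbase[where \<B> = \<S>])
    (simp_all add: generate_topology_on_eq finite'_intersection_of_eq_relative_to_Union[OF assms(1)])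

lemma ex_upper_bound_if_finite_subfamilies_bounded:
  assumes maximal: "\<And>M. maximal_ideal M \<Longrightarrow> M \<in> \<sigma>"
    and ideals: "\<And>I. I \<in> \<sigma> \<Longrightarrow> ideal I"
    and bounded: "\<And>\<F>. finite \<F> \<Longrightarrow> \<F> \<subseteq> \<A> \<Longrightarrow> \<exists>I\<in>\<sigma>. \<Union>\<F> \<subseteq> I"
  shows "\<exists>M\<in>\<sigma>. \<Union>\<A> \<subseteq> M"
proof -
  have "\<exists>I. ideal I \<and> T \<subseteq> I" if T: "finite T" "T \<subseteq> \<Union>\<A>" for T
  proof -
    obtain \<F> where "finite \<F>" "\<F> \<subseteq> \<A>" "T \<subseteq> \<Union>\<F>"
      using finite_subset_Union[OF T] by blast
    with bounded ideals show ?thesis by (meson order.trans)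
  qed
  then show ?thesis using ex_maximal_ideal_superset_finitary maximal by meson
qed

lemma compact_space_ideal_topology:
  assumes maximal: "\<And>M. maximal_ideal M \<Longrightarrow> M \<in> \<sigma>"
    and ideals: "\<And>I. I \<in> \<sigma> \<Longrightarrow> ideal I"
  shows "compact_space (ideal_topology \<sigma>)"
proof -
  define \<S> where "\<S> = insert \<sigma> {\<sigma> - up_set \<sigma> a | a. ideal a}"
  have Union_\<S>: "\<Union>\<S> = \<sigma>" unfolding \<S>_def by blast
  show ?thesis
    unfolding ideal_topology_def \<S>_def[symmetric]
  proof (rule compact_space_topology_generated_by)
    show "\<Union>\<S> \<in> \<S>" unfolding Union_\<S> \<S>_def by blast
  next
    fix \<C> assume "\<C> \<subseteq> \<S>" and cover: "\<Union>\<C> = \<Union>\<S>"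
    show "\<exists>\<C>'. finite \<C>' \<and> \<C>' \<subseteq> \<C> \<and> \<Union>\<C>' = \<Union>\<S>"
    proof (rule ccontr)
      assume "\<not> ?thesis"
      then have no_finite_subcover: "\<Union>\<C>' \<noteq> \<sigma>" if "finite \<C>'" "\<C>' \<subseteq> \<C>" for \<C>'
        using that Union_\<S> by auto
      then have "\<sigma> \<notin> \<C>" using no_finite_subcover[of "{\<sigma>}"] by auto
      define \<A> where "\<A> = {a. ideal a \<and> \<sigma> - up_set \<sigma> a \<in> \<C>}"
      have \<A>_bounded: "\<exists>I\<in>\<sigma>. \<Union>\<F> \<subseteq> I" if "finite \<F>" "\<F> \<subseteq> \<A>" for \<F>
      proof -
        let ?\<C>' = "(\<lambda>a. \<sigma> - up_set \<sigma> a) ` \<F>"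
        have "finite ?\<C>'" "?\<C>' \<subseteq> \<C>" using that unfolding \<A>_def by auto
        then have "\<Union>?\<C>' \<noteq> \<sigma>" by (rule no_finite_subcover)
        then obtain I where "I \<in> \<sigma>" "I \<notin> \<Union>?\<C>'" by blast
        then show ?thesis unfolding up_set_def by blast
      qed
      from ex_upper_bound_if_finite_subfamilies_bounded[OF maximal ideals \<A>_bounded]
      obtain M where "M \<in> \<sigma>" "\<Union>\<A> \<subseteq> M" ..
      then have "M \<in> \<Union>\<C>" using cover Union_\<S> by simp
      then obtain U where "U \<in> \<C>" "M \<in> U" by blast
      then obtain a where "a \<in> \<A>" "U = \<sigma> - up_set \<sigma> a"
        using \<open>\<C> \<subseteq> \<S>\<close> \<open>\<sigma> \<notin> \<C>\<close> unfolding \<S>_def \<A>_def by blast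
      then show False using \<open>M \<in> U\<close> \<open>M \<in> \<sigma>\<close> \<open>\<Union>\<A> \<subseteq> M\<close> unfolding up_set_def by blast
    qed
  qed
qed

theorem corollary3p4:
  shows "compact_space (ideal_topology {M :: 'a::{comm_semiring_0,comm_monoid_mult} set. maximal_ideal M})
       \<and> compact_space (ideal_topology {P :: 'a set. prime_ideal P})
       \<and> compact_space (ideal_topology {A :: 'a set. strongly_irreducible_ideal A})
       \<and> compact_space (ideal_topology {A :: 'a set. primary_ideal A})
       \<and> compact_space (ideal_topology {A :: 'a set. irreducible_ideal A})
       \<and> compact_space (ideal_topology {A :: 'a set. radical_ideal A})"
proof -
  have maximal_in_all_classes:
    "prime_ideal M" "strongly_irreducible_ideal M" "primary_ideal M"
    "irreducible_ideal M" "radical_ideal M" if "maximal_ideal M" for M :: "'a set"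
    using maximal_imp_prime_ideal[OF that]
    by (simp_all add: prime_imp_strongly_irreducible_ideal prime_imp_primary_ideal
        strongly_irreducible_imp_irreducible_ideal prime_imp_radical_ideal)
  have all_classes_ideals: "ideal I"
    if "maximal_ideal I \<or> prime_ideal I \<or> strongly_irreducible_ideal I \<or> primary_ideal I
        \<or> irreducible_ideal I \<or> radical_ideal I" for I :: "'a set"
    using that unfolding maximal_ideal_def prime_ideal_def strongly_irreducible_ideal_def
      primary_ideal_def irreducible_ideal_def radical_ideal_def by blast
  show ?thesis
    using maximal_in_all_classes all_classes_ideals
    by (intro conjI compact_space_ideal_topology) auto
qed

end
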